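(* Let $q$ be a prime power, let $l_1,\dots,l_t$ be distinct odd primes coprime to $q$, and let $r_1,\dots,r_t$ be positive integers. For each $i$ write $\mathrm{ord}_{l_i}(q)=2^{a_i}d_i$ with $a_i\ge 0$ an integer and $d_i\ge1$ odd. Then: (1) if there exists $j\in\{1,\dots,t\}$ with $a_j=0$ or $a_j\ge 2$, then $\left|\Omega_{q^2,\prod_{i=1}^{t}l_i^{r_i}}\right|=\left|\Omega_{q^2,\prod_{i\ne j}l_i^{r_i}}\right|$; (2) if $a_1=\dots=a_t=1$, then $\left|\Omega_{q^2,\prod_{i=1}^{t}l_i^{r_i}}\right|=\sum_{d\mid \prod_{i=1}^t l_i^{r_i}}\frac{\phi(d)}{\mathrm{ord}_d(q^2)}$; (3) if $a_i\ne 1$ for all $i\in\{1,\dots,t\}$, then $\left|\Omega_{q^2,\prod_{i=1}^{t}l_i^{r_i}}\right|=1$. Here an empty product is taken to be $1$.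
   Context: $\mathbb{F}_{q^2}$ is the finite field with $q^2$ elements. For $\alpha\in\mathbb{F}_{q^2}$ put $\bar\alpha=\alpha^q$, and for $f(x)=\sum_i f_ix^i$ put $\overline{f(x)}=\sum_i \bar f_i x^i$. For $f(x)$ with $f(0)\neq 0$, $f^*(x)=x^{\deg f}f(0)^{-1}f(1/x)$ and $f^\dagger(x)=\overline{f^*(x)}$. A polynomial is SCRIM if it is monic, irreducible over $\mathbb{F}_{q^2}$, has nonzero constant term, and satisfies $f=f^\dagger$. $\Omega_{q^2,n}$ denotes the set of SCRIM polynomials in $\mathbb{F}_{q^2}[x]$ dividing $x^n-1$. $\phi$ is Euler's totient function and $\mathrm{ord}_d(a)$ is the multiplicative order of $a$ modulo $d$. *)

theory Defs
  imports "HOL-Computational_Algebra.Computational_Algebra" "HOL-Number_Theory.Pocklington"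
begin

definition conj_poly :: "nat \<Rightarrow> 'a::field poly \<Rightarrow> 'a poly" where
  "conj_poly q f = map_poly (\<lambda>c. c ^ q) f"

definition recip_poly :: "'a::field poly \<Rightarrow> 'a poly" where
  "recip_poly f = Polynomial.smult (inverse (Polynomial.coeff f 0)) (reflect_poly f)"

definition dagger_poly :: "nat \<Rightarrow> 'a::field poly \<Rightarrow> 'a poly" where
  "dagger_poly q f = conj_poly q (recip_poly f)"

definition SCRIM :: "nat \<Rightarrow> 'a::field poly \<Rightarrow> bool" where
  "SCRIM q f \<longleftrightarrow> Polynomial.lead_coeff f = 1 \<and> irreducible f \<and> Polynomial.coeff f 0 \<noteq> 0 \<and> f = dagger_poly q f"

definition Omega :: "nat \<Rightarrow> nat \<Rightarrow> 'a::field poly set" where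
  "Omega q n = {f. SCRIM q f \<and> f dvd (Polynomial.monom 1 n - 1)}"

end

(*
  Let n be coprime to q and let f be a monic irreducible factor of x^n - 1 over the field F with
  q^2 elements, with a root alpha of multiplicative order e (a divisor of n) in the algebraic
  closure. The roots of f are exactly the Frobenius conjugates alpha^(q^(2i)), i < ord_e(q^2),
  and f^dagger has the root alpha^(-q). Hence f is SCRIM iff alpha^(-q) is such a conjugate,
  i.e. iff e divides q^j + 1 for some odd j.
  For a prime l with ord_l(q) = 2^a d, d odd, some odd j has l | q^j + 1 only if a = 1, and if
  a = 1 then l^r | q^j + 1 for an odd j by lifting the exponent. So if a_j <> 1, the prime l_j
  divides the order of no root of a SCRIM factor, which gives (1), and if all a_i <> 1 only
  x - 1 is left, which gives (3). If all a_i = 1, then n | q^J + 1 for an odd J, so every monic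
  irreducible factor of x^n - 1 is SCRIM; the phi(e) roots of order e fall into Frobenius
  orbits of size ord_e(q^2), one per factor, which gives (2).
*)
theory Submission
  imports Defs "HOL-Algebra.Algebraic_Closure_Type"
begin

hide_const (open) Divisibility.prime Divisibility.irreducible Polynomials.lead_coeff
  Polynomials.degree up_ring.coeff up_ring.monom module.smult

section \<open>Ring homomorphisms and polynomials\<close>

locale comm_ring_hom =
  fixes h :: "'a::comm_ring_1 \<Rightarrow> 'b::comm_ring_1"
  assumes hom_add: "h (x + y) = h x + h y"
    and hom_mult: "h (x * y) = h x * h y"
    and hom_one: "h 1 = 1"
begin

lemma hom_zero [simp]: "h 0 = 0"
  using hom_add[of 0 0] by simp

lemma hom_uminus: "h (- x) = - h x"
  using hom_add[of x "- x"] by (simp add: eq_neg_iff_add_eq_0 add.commute)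

lemma hom_diff: "h (x - y) = h x - h y"
  using hom_add[of "x - y" y] by simp

lemma map_poly_diff: "map_poly h (p - r) = map_poly h p - map_poly h r"
  by (rule poly_eqI) (simp add: coeff_map_poly hom_diff)

lemma map_poly_mult: "map_poly h (p * r) = map_poly h p * map_poly h r"
proof -
  have sum_hom: "h (sum g A) = (\<Sum>i\<in>A. h (g i))" for g :: "nat \<Rightarrow> 'a" and A
    by (induct A rule: infinite_finite_induct) (simp_all add: hom_add)
  show ?thesis
    by (rule poly_eqI) (simp add: coeff_map_poly coeff_mult sum_hom hom_mult)
qed

lemma map_poly_prod: "map_poly h (\<Prod>i\<in>A. f i) = (\<Prod>i\<in>A. map_poly h (f i))"
  by (induct A rule: infinite_finite_induct) (simp_all add: map_poly_mult hom_one)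

lemma map_poly_linear: "map_poly h [:c, 1:] = [:h c, 1:]"
  by (simp add: map_poly_pCons hom_one)

lemma poly_map_poly: "poly (map_poly h p) (h x) = h (poly p x)"
  by (induct p rule: pCons_induct) (simp_all add: map_poly_pCons hom_add hom_mult)

end

lemma frobenius_comm_ring_hom:
  assumes "prime CHAR('a::comm_ring_1)"
  shows "comm_ring_hom (\<lambda>x::'a. x ^ CHAR('a) ^ n)"
  by unfold_locales (simp_all add: freshmans_dream'[OF assms] power_mult_distrib)

interpretation to_ac: comm_ring_hom to_ac
  by unfold_locales simp_all

lemma degree_map_poly_to_ac [simp]: "degree (map_poly to_ac p) = degree p"
  by (rule degree_map_poly) simp

lemma map_poly_to_ac_eq_0_iff [simp]: "map_poly to_ac p = 0 \<longleftrightarrow> p = 0"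
  by (rule map_poly_eq_0_iff) simp_all

lemma map_poly_to_ac_reflect_poly:
  "map_poly to_ac (reflect_poly p) = reflect_poly (map_poly to_ac p)"
  by (rule poly_eqI) (simp add: coeff_reflect_poly coeff_map_poly)

lemma monic_dvd_imp_eq:
  fixes f g :: "'a::field poly"
  assumes "f dvd g" "g \<noteq> 0" "degree g \<le> degree f" "lead_coeff f = 1" "lead_coeff g = 1"
  shows "f = g"
proof -
  obtain r where r: "g = f * r" using assms(1) by blast
  with assms(2) have "f \<noteq> 0" "r \<noteq> 0" by auto
  then have "degree r = 0" using assms(3) r by (simp add: degree_mult_eq)
  then obtain c where c: "r = [:c:]" by (rule degree_eq_zeroE)
  then have "lead_coeff g = lead_coeff f * c" by (simp add: r lead_coeff_mult)
  with assms(4,5) c r show ?thesis by simp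
qed

lemma irreducible_imp_degree_pos: "irreducible (f :: 'a::field poly) \<Longrightarrow> degree f > 0"
  by (metis Factorial_Ring.irreducible_def gr0I is_unit_iff_degree)

lemma x_pow_minus_1_dvd:
  assumes "m dvd n"
  shows "(monom 1 m - 1 :: 'a::comm_ring_1 poly) dvd monom 1 n - 1"
proof -
  obtain c where "n = m * c" using assms by blast
  then have "(monom 1 n :: 'a poly) = monom 1 m ^ c" by (simp add: monom_power)
  then have "(monom 1 n - 1 :: 'a poly) = (monom 1 m - 1) * (\<Sum>i<c. monom 1 m ^ i)"
    by (simp add: power_diff_1_eq)
  then show ?thesis by simp
qed

lemma x_pow_1_minus_1: "(monom 1 1 - 1 :: 'a::comm_ring_1 poly) = [:-1, 1:]"
  by (rule poly_eqI) (simp add: coeff_monom coeff_pCons split: nat.split)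

lemma degree_x_pow_minus_1: "degree (monom 1 n - 1 :: 'a::comm_ring_1 poly) = n"
  using degree_add_eq_left[of "- 1" "monom 1 n :: 'a poly"] by (cases n) (simp_all add: degree_monom_eq)

lemma x_pow_minus_1_neq_0: "n > 0 \<Longrightarrow> (monom 1 n - 1 :: 'a::comm_ring_1 poly) \<noteq> 0"
  using degree_x_pow_minus_1[of n] by (metis degree_0 less_irrefl)

lemma dagger_poly_monic:
  fixes f :: "'a::field poly"
  assumes "coeff f 0 \<noteq> 0" "q > 0"
  shows "lead_coeff (dagger_poly q f) = 1" "degree (dagger_poly q f) = degree f"
proof -
  have deg: "degree (recip_poly f) = degree f" using assms(1) by (simp add: recip_poly_def)
  have "degree (conj_poly q g) = degree g" for g :: "'a poly"
    unfolding conj_poly_def using assms(2) by (intro degree_map_poly) simp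
  then show "degree (dagger_poly q f) = degree f" by (simp add: dagger_poly_def deg)
  have "lead_coeff (recip_poly f) = 1"
    using assms(1) deg by (simp add: recip_poly_def coeff_reflect_poly)
  then show "lead_coeff (dagger_poly q f) = 1"
    using \<open>degree (dagger_poly q f) = degree f\<close> deg assms(2)
    by (simp add: dagger_poly_def conj_poly_def coeff_map_poly)
qed

section \<open>Roots in the algebraic closure\<close>

definition ac_roots :: "'a::field poly \<Rightarrow> 'a alg_closure set" where
  "ac_roots p = {z. poly (map_poly to_ac p) z = 0}"

lemma ac_roots_mult: "ac_roots (p * r) = ac_roots p \<union> ac_roots r"
  by (auto simp: ac_roots_def to_ac.map_poly_mult)

lemma ac_roots_mono: "p dvd r \<Longrightarrow> ac_roots p \<subseteq> ac_roots r"
  by (auto simp: ac_roots_mult)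

lemma ac_roots_smult: "c \<noteq> 0 \<Longrightarrow> ac_roots (smult c p) = ac_roots p"
  by (simp add: ac_roots_def map_poly_smult)

lemma ac_roots_prod_mset: "ac_roots (prod_mset A) = (\<Union>f\<in>set_mset A. ac_roots f)"
  by (induct A) (simp_all add: ac_roots_mult, simp add: ac_roots_def)

lemma ac_roots_x_pow_minus_1: "ac_roots (monom 1 n - 1) = {z. z ^ n = 1}"
  by (simp add: ac_roots_def to_ac.map_poly_diff map_poly_monom poly_monom)

lemma finite_ac_roots: "p \<noteq> 0 \<Longrightarrow> finite (ac_roots p)"
  unfolding ac_roots_def by (rule poly_roots_finite) simp

lemma card_ac_roots_le: "p \<noteq> 0 \<Longrightarrow> card (ac_roots p) \<le> degree p"
  unfolding ac_roots_def using card_poly_roots_bound[of "map_poly to_ac p"] by simp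

lemma ac_roots_nonempty: "degree p > 0 \<Longrightarrow> ac_roots p \<noteq> {}"
  using alg_closed_imp_poly_has_root[of "map_poly to_ac p"] by (auto simp: ac_roots_def)

lemma ac_roots_irreducible_nonempty: "irreducible f \<Longrightarrow> ac_roots f \<noteq> {}"
  by (simp add: ac_roots_nonempty irreducible_imp_degree_pos)

lemma irreducible_dvd_if_common_root:
  fixes f g :: "'a::field poly"
  assumes f: "irreducible f" and z: "z \<in> ac_roots f" "z \<in> ac_roots g"
  shows "f dvd g"
proof -
  let ?P = "\<lambda>h::'a poly. h \<noteq> 0 \<and> z \<in> ac_roots h"
  have "?P f" using f z by auto
  then obtain h where h: "?P h" and min: "\<And>r. ?P r \<Longrightarrow> degree h \<le> degree r"
    using ex_has_least_nat[of ?P f degree] by blast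
  have h_dvd: "h dvd r" if r: "z \<in> ac_roots r" for r
  proof (rule ccontr)
    assume "\<not> h dvd r"
    then have "r mod h \<noteq> 0" by (simp add: dvd_eq_mod_eq_0)
    moreover have "z \<in> ac_roots (r mod h)"
      using h r by (simp add: ac_roots_def minus_div_mult_eq_mod[symmetric]
          to_ac.map_poly_diff to_ac.map_poly_mult)
    ultimately show False
      using min degree_mod_less'[of h r] h by fastforce
  qed
  obtain c where c: "f = h * c" using h_dvd[OF z(1)] by blast
  have "\<not> is_unit h"
    using h by (auto simp: ac_roots_def map_poly_pCons elim!: is_unit_polyE)
  then have "is_unit c" using Factorial_Ring.irreducibleD[OF f c] by blast
  then have "f dvd h" using c by (simp add: mult_unit_dvd_iff')
  then show ?thesis using h_dvd[OF z(2)] by (rule dvd_trans)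
qed

lemma monic_irreducible_eq_if_common_root:
  fixes f g :: "'a::field poly"
  assumes "irreducible f" "lead_coeff f = 1" "irreducible g" "lead_coeff g = 1"
    and "z \<in> ac_roots f" "z \<in> ac_roots g"
  shows "f = g"
proof (rule monic_dvd_imp_eq)
  show "f dvd g" using assms irreducible_dvd_if_common_root by metis
  have "g dvd f" using assms irreducible_dvd_if_common_root by metis
  moreover show "g \<noteq> 0" "lead_coeff f = 1" "lead_coeff g = 1" using assms by auto
  ultimately show "degree g \<le> degree f" using assms(1) by (auto intro: dvd_imp_degree_le)
qed

lemma exists_monic_irreducible_factor_root:
  fixes p :: "'a::field poly"
  assumes p: "p \<noteq> 0" and z: "z \<in> ac_roots p"
  obtains f where "lead_coeff f = 1" "irreducible f" "f dvd p" "z \<in> ac_roots f"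
proof -
  obtain A where A: "prod_mset A = smult (inverse (lead_coeff p)) p"
    and prime: "\<And>g. g \<in># A \<Longrightarrow> prime_elem g"
    using field_poly_prod_mset_prime_factorization[OF p]
      field_poly_in_prime_factorization_imp_prime by blast
  have "z \<in> ac_roots (prod_mset A)" using A p z by (simp add: ac_roots_smult)
  then obtain g where g: "g \<in># A" "z \<in> ac_roots g" by (auto simp: ac_roots_prod_mset)
  moreover have "prod_mset A dvd p" using A p by (simp add: smult_dvd_iff)
  ultimately have "g dvd p" using dvd_prod_mset dvd_trans by blast
  have "g \<noteq> 0" using prime[OF g(1)] by auto
  define f where "f = smult (inverse (lead_coeff g)) g"
  show ?thesis
  proof
    show "lead_coeff f = 1" using \<open>g \<noteq> 0\<close> by (simp add: f_def)
    have "is_unit [:inverse (lead_coeff g):]"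
      using \<open>g \<noteq> 0\<close> by (simp add: is_unit_const_poly_iff dvd_field_iff)
    moreover have "f = [:inverse (lead_coeff g):] * g" by (simp add: f_def)
    ultimately show "irreducible f"
      using prime[OF g(1)] irreducible_mult_unit_left prime_elem_imp_irreducible by metis
    show "f dvd p" using \<open>g dvd p\<close> \<open>g \<noteq> 0\<close> by (simp add: f_def smult_dvd_iff)
    show "z \<in> ac_roots f" using g(2) \<open>g \<noteq> 0\<close> by (simp add: f_def ac_roots_smult)
  qed
qed

definition monic_irreducible_divisors :: "'a::field poly \<Rightarrow> 'a poly set" where
  "monic_irreducible_divisors p = {f. lead_coeff f = 1 \<and> irreducible f \<and> f dvd p}"

lemma finite_monic_irreducible_divisors:
  assumes "p \<noteq> 0"
  shows "finite (monic_irreducible_divisors p)"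
proof (rule finite_imageD)
  show "inj_on ac_roots (monic_irreducible_divisors p)"
  proof (rule inj_onI)
    fix f g assume fg: "f \<in> monic_irreducible_divisors p" "g \<in> monic_irreducible_divisors p"
      and "ac_roots f = ac_roots g"
    moreover obtain z where "z \<in> ac_roots f"
      using fg(1) ac_roots_irreducible_nonempty by (fastforce simp: monic_irreducible_divisors_def)
    ultimately show "f = g"
      by (auto simp: monic_irreducible_divisors_def intro: monic_irreducible_eq_if_common_root)
  qed
  have "ac_roots ` monic_irreducible_divisors p \<subseteq> Pow (ac_roots p)"
    by (auto simp: monic_irreducible_divisors_def dest: ac_roots_mono)
  then show "finite (ac_roots ` monic_irreducible_divisors p)"
    using finite_ac_roots[OF assms] by (meson finite_Pow_iff finite_subset)
qed

section \<open>Roots of unity\<close>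

definition primitive_roots_of_unity :: "nat \<Rightarrow> 'a::idom set" where
  "primitive_roots_of_unity e = {z. \<forall>m. z ^ m = 1 \<longleftrightarrow> e dvd m}"

lemma primitive_root_pow_eq_1_iff:
  "z \<in> primitive_roots_of_unity e \<Longrightarrow> z ^ m = 1 \<longleftrightarrow> e dvd m"
  by (simp add: primitive_roots_of_unity_def)

lemma primitive_roots_of_unity_disjoint:
  assumes "e \<noteq> e'"
  shows "primitive_roots_of_unity e \<inter> (primitive_roots_of_unity e' :: 'a::idom set) = {}"
proof -
  have "e = e'" if "z \<in> primitive_roots_of_unity e" "z \<in> primitive_roots_of_unity e'" for z :: 'a
    using primitive_root_pow_eq_1_iff[OF that(1), of e'] primitive_root_pow_eq_1_iff[OF that(2), of e']
      primitive_root_pow_eq_1_iff[OF that(1), of e] primitive_root_pow_eq_1_iff[OF that(2), of e]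
    by (simp add: dvd_antisym)
  with assms show ?thesis by blast
qed

lemma primitive_root_pow_coprime:
  assumes "z \<in> primitive_roots_of_unity e" "coprime c e"
  shows "z ^ c \<in> primitive_roots_of_unity e"
proof -
  have "e dvd c * m \<longleftrightarrow> e dvd m" for m
    using assms(2) by (simp add: coprime_commute coprime_dvd_mult_right_iff)
  with assms(1) show ?thesis by (simp add: primitive_roots_of_unity_def flip: power_mult)
qed

lemma primitive_root_of_unity_exists:
  fixes z :: "'a::idom"
  assumes "z ^ d = 1" "d > 0"
  obtains e where "e dvd d" "z \<in> primitive_roots_of_unity e"
proof -
  define e where "e = (LEAST m. m > 0 \<and> z ^ m = 1)"
  have e: "e > 0" "z ^ e = 1"
    using LeastI[of "\<lambda>m. m > 0 \<and> z ^ m = 1" d] assms by (auto simp: e_def)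
  have "z ^ m = 1 \<longleftrightarrow> e dvd m" for m
  proof
    assume m: "z ^ m = 1"
    have "z ^ m = (z ^ e) ^ (m div e) * z ^ (m mod e)"
      by (simp flip: power_mult power_add)
    with m e(2) have "z ^ (m mod e) = 1" by simp
    then have "m mod e = 0"
      using not_less_Least[of "m mod e" "\<lambda>m. m > 0 \<and> z ^ m = 1"] e(1)
      by (auto simp: e_def[symmetric])
    then show "e dvd m" by auto
  qed (use e in \<open>auto elim!: dvdE simp: power_mult\<close>)
  then have "z \<in> primitive_roots_of_unity e" by (simp add: primitive_roots_of_unity_def)
  with that show ?thesis using assms(1) primitive_root_pow_eq_1_iff by blast
qed

lemma roots_of_unity_eq_Union:
  assumes "d > 0"
  shows "{z::'a::idom. z ^ d = 1} = (\<Union>e\<in>{e. e dvd d}. primitive_roots_of_unity e)"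
  using assms by (auto simp: primitive_root_pow_eq_1_iff elim: primitive_root_of_unity_exists)

lemma finite_roots_of_unity: "d > 0 \<Longrightarrow> finite {z::'a::idom. z ^ d = 1}"
  using poly_roots_finite[OF x_pow_minus_1_neq_0, of d] by (simp add: poly_monom)

lemma card_roots_of_unity_eq_sum:
  assumes "d > 0"
  shows "card {z::'a::idom. z ^ d = 1} = (\<Sum>e | e dvd d. card (primitive_roots_of_unity e :: 'a set))"
proof -
  have fin: "finite (primitive_roots_of_unity e :: 'a set)" if "e dvd d" for e
    by (rule finite_subset[OF _ finite_roots_of_unity[OF assms]])
      (use that in \<open>auto simp: primitive_root_pow_eq_1_iff\<close>)
  show ?thesis
    unfolding roots_of_unity_eq_Union[OF assms]
  proof (rule card_UN_disjoint)
    show "finite {e. e dvd d}" using assms by simp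
    show "\<forall>e\<in>{e. e dvd d}. finite (primitive_roots_of_unity e :: 'a set)" using fin by blast
    show "\<forall>e\<in>{e. e dvd d}. \<forall>e'\<in>{e. e dvd d}. e \<noteq> e' \<longrightarrow>
        primitive_roots_of_unity e \<inter> (primitive_roots_of_unity e' :: 'a set) = {}"
      using primitive_roots_of_unity_disjoint by blast
  qed
qed

lemma card_roots_eq_degree_if_no_multiple_root:
  fixes p :: "'a::alg_closed_field poly"
  assumes p: "p \<noteq> 0" and simple: "\<And>z. poly p z = 0 \<Longrightarrow> poly (pderiv p) z \<noteq> 0"
  shows "card {z. poly p z = 0} = degree p"
proof -
  obtain A where A: "size A = degree p" "p = smult (lead_coeff p) (\<Prod>x\<in>#A. [:-x, 1:])"
    using alg_closed_imp_factorization[OF p] by blast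
  have roots: "{z. poly p z = 0} = set_mset A"
    using p by (subst A(2)) (auto simp: poly_prod_mset prod_mset_zero_iff)
  have le1: "count A x \<le> 1" for x
  proof (rule ccontr)
    assume "\<not> count A x \<le> 1"
    then have "x \<in># A" by (simp flip: count_greater_zero_iff)
    then obtain B where B: "A = add_mset x B" by (blast dest: multi_member_split)
    with \<open>\<not> count A x \<le> 1\<close> have "x \<in># B" by (simp flip: count_greater_zero_iff)
    then obtain C where "B = add_mset x C" by (blast dest: multi_member_split)
    define a where "a = [:-x, 1:]"
    define r where "r = smult (lead_coeff p) (\<Prod>y\<in>#C. [:-y, 1:])"
    have "p = a * (a * r)"
      using A(2) B \<open>B = add_mset x C\<close> by (simp add: a_def r_def mult_smult_right)
    moreover have "poly a x = 0" by (simp add: a_def)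
    ultimately have "poly p x = 0" "poly (pderiv p) x = 0"
      by (simp_all add: pderiv_mult)
    with simple show False by blast
  qed
  have "count A x = count (mset_set (set_mset A)) x" for x
    using le1[of x] by (cases "x \<in># A") (auto simp: count_mset_set' not_in_iff simp flip: count_greater_zero_iff)
  then have "A = mset_set (set_mset A)" by (rule multiset_eqI)
  then have "card (set_mset A) = size A" by (metis size_mset_set)
  with roots A(1) show ?thesis by simp
qed

lemma card_roots_of_unity:
  assumes d: "of_nat d \<noteq> (0::'a::alg_closed_field)"
  shows "card {z::'a. z ^ d = 1} = d"
proof -
  have "d > 0" using d by (rule contrapos_np) simp
  define p :: "'a poly" where "p = monom 1 d - 1"
  have "degree p = d"
    unfolding p_def by (rule degree_x_pow_minus_1)
  moreover have "p \<noteq> 0" using \<open>degree p = d\<close> \<open>d > 0\<close> by auto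
  moreover have "poly (pderiv p) z \<noteq> 0" if "poly p z = 0" for z
  proof -
    have "z ^ d = 1" using that by (simp add: p_def poly_monom)
    then have "z \<noteq> 0" using \<open>d > 0\<close> by (metis power_0_left zero_neq_one gr_implies_not0)
    then show ?thesis using d by (simp add: p_def pderiv_diff pderiv_monom poly_monom)
  qed
  ultimately have "card {z. poly p z = 0} = d"
    by (metis card_roots_eq_degree_if_no_multiple_root)
  then show ?thesis by (simp add: p_def poly_monom)
qed

lemma card_primitive_roots_of_unity:
  assumes "of_nat d \<noteq> (0::'a::alg_closed_field)"
  shows "card (primitive_roots_of_unity d :: 'a set) = totient d"
  using assms
proof (induction d rule: less_induct)
  case (less d)
  have "d > 0" using less.prems by (rule contrapos_np) simp
  define D where "D = {e. e dvd d} - {d}"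
  have "finite D" "d \<notin> D" and D: "{e. e dvd d} = insert d D"
    using \<open>d > 0\<close> by (auto simp: D_def)
  have IH: "card (primitive_roots_of_unity e :: 'a set) = totient e" if "e \<in> D" for e
  proof (rule less.IH)
    show "e < d" using that \<open>d > 0\<close> by (auto simp: D_def dest: dvd_imp_le)
    show "of_nat e \<noteq> (0::'a)"
      using that less.prems by (auto simp: D_def elim!: dvdE)
  qed
  have "card (primitive_roots_of_unity d :: 'a set) + (\<Sum>e\<in>D. totient e) = d"
    using card_roots_of_unity_eq_sum[OF \<open>d > 0\<close>, where 'a='a] card_roots_of_unity[OF less.prems]
    by (simp add: D \<open>finite D\<close> \<open>d \<notin> D\<close> IH)
  also have "d = totient d + (\<Sum>e\<in>D. totient e)"
    using totient_divisor_sum[of d] by (simp add: D \<open>finite D\<close> \<open>d \<notin> D\<close>)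
  finally show ?case by simp
qed

lemma primitive_root_pow_eq_iff:
  assumes z: "z \<in> primitive_roots_of_unity e" and "e > 0"
  shows "z ^ a = z ^ b \<longleftrightarrow> [a = b] (mod e)"
proof -
  have "z \<noteq> 0" using primitive_root_pow_eq_1_iff[OF z, of e] \<open>e > 0\<close> by (auto simp: power_0_left)
  have *: "z ^ a = z ^ b \<longleftrightarrow> [a = b] (mod e)" if "a \<le> b" for a b
  proof -
    have "z ^ b = z ^ a * z ^ (b - a)" using that by (simp flip: power_add)
    then have "z ^ a = z ^ b \<longleftrightarrow> z ^ (b - a) = 1" using \<open>z \<noteq> 0\<close> by auto
    also have "\<dots> \<longleftrightarrow> [b = a] (mod e)"
      using that by (simp add: primitive_root_pow_eq_1_iff[OF z] cong_altdef_nat)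
    finally show ?thesis by (simp add: cong_sym_eq)
  qed
  show ?thesis using *[of a b] *[of b a] by (cases "a \<le> b") (auto simp: cong_sym_eq)
qed

lemma frobenius_conjugates_eq_iff:
  assumes z: "z \<in> primitive_roots_of_unity e" and "e > 0" "coprime e Q"
  shows "z ^ Q ^ i = z ^ Q ^ j \<longleftrightarrow> [i = j] (mod ord e Q)"
  using primitive_root_pow_eq_iff[OF assms(1,2)] order_divides_expdiff[OF assms(3)] by simp

section \<open>Divisors of \<open>q ^ j + 1\<close> for odd \<open>j\<close>\<close>

lemma dvd_pow_odd_mult_plus_1:
  fixes m x :: nat
  assumes "m dvd x ^ j + 1" "odd c"
  shows "m dvd x ^ (j * c) + 1"
proof -
  have "int m dvd int (x ^ j + 1)" using assms(1) by (simp only: int_dvd_int_iff)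
  then have "[int x ^ j = -1] (mod int m)" by (simp add: cong_iff_dvd_diff add.commute)
  then have "[(int x ^ j) ^ c = (-1) ^ c] (mod int m)" by (rule cong_pow)
  then have "[int x ^ (j * c) = -1] (mod int m)" using assms(2) by (simp add: power_mult)
  then have "int m dvd int (x ^ (j * c) + 1)" by (simp add: cong_iff_dvd_diff add.commute)
  then show ?thesis by (simp only: int_dvd_int_iff)
qed

lemma lifting_the_exponent_step:
  fixes x :: int and l s :: nat
  assumes "odd l" "int l ^ s dvd x + 1" "s \<ge> 1"
  shows "int l ^ Suc s dvd x ^ l + 1"
proof -
  define S where "S = (\<Sum>i<l. (-1) ^ (l - Suc i) * x ^ i)"
  have "x ^ l - (-1) ^ l = (x - (-1)) * S"
    unfolding S_def by (rule power_diff_sumr2)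
  then have factor: "x ^ l + 1 = (x + 1) * S" using \<open>odd l\<close> by simp
  have "int l dvd int l ^ s" using assms(3) by (simp add: dvd_power)
  then have "int l dvd x + 1" using assms(2) by (rule dvd_trans)
  then have "[x = -1] (mod int l)" by (simp add: cong_iff_dvd_diff)
  \<comment> \<open>modulo \<open>l\<close> each of the \<open>l\<close> terms of \<open>S\<close> is \<open>(-1) ^ (l - 1) = 1\<close>,
    so \<open>l\<close> divides \<open>S\<close>\<close>
  then have "[S = (\<Sum>i<l. (-1) ^ (l - Suc i) * (-1) ^ i)] (mod int l)"
    unfolding S_def by (intro cong_sum cong_mult cong_refl cong_pow)
  also have "(\<Sum>i<l. (-1::int) ^ (l - Suc i) * (-1) ^ i) = (\<Sum>i<l. (-1) ^ (l - 1))"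
    by (intro sum.cong refl) (simp flip: power_add)
  also have "\<dots> = int l" using \<open>odd l\<close> by simp
  finally have "int l dvd S" by (simp add: cong_dvd_iff)
  with assms(2) have "int l ^ s * int l dvd (x + 1) * S" by (rule mult_dvd_mono)
  then show ?thesis by (simp only: factor power_Suc2)
qed

lemma lifting_the_exponent:
  fixes x :: int
  assumes "odd l" "int l dvd x + 1"
  shows "int l ^ Suc s dvd x ^ (l ^ s) + 1"
proof (induct s)
  case 0
  then show ?case using assms(2) by simp
next
  case (Suc s)
  have "x ^ l ^ Suc s = (x ^ l ^ s) ^ l" by (simp only: power_Suc2 power_mult)
  then show ?case using lifting_the_exponent_step[OF assms(1) Suc] by simp
qed

lemma prime_dvd_pow_half_ord_plus_1:
  fixes l q d :: nat
  assumes "prime l" "coprime l q" "ord l q = 2 * d"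
  shows "l dvd q ^ d + 1"
proof -
  have "d > 0" using assms(2,3) ord_gt_0_iff[of l q] by simp
  have "q \<noteq> 0"
  proof
    assume "q = 0"
    with assms(2) have "l = 1" by simp
    with assms(1) show False by simp
  qed
  then have "(q ^ d) ^ 2 - 1 = (q ^ d - 1) * (q ^ d + 1)"
    by (simp add: power2_eq_square algebra_simps diff_mult_distrib)
  moreover have "[(q ^ d) ^ 2 = 1] (mod l)"
    using ord[of q l] assms(3) by (simp add: power_mult mult.commute)
  ultimately have "l dvd (q ^ d - 1) * (q ^ d + 1)"
    using \<open>q \<noteq> 0\<close> by (simp add: cong_altdef_nat)
  moreover have "\<not> l dvd q ^ d - 1"
  proof
    assume "l dvd q ^ d - 1"
    then have "[q ^ d = 1] (mod l)" using \<open>q \<noteq> 0\<close> by (simp add: cong_altdef_nat)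
    then show False using ord_minimal[of d l q] \<open>d > 0\<close> assms(3) by simp
  qed
  ultimately show ?thesis using assms(1) prime_dvd_mult_iff by blast
qed

lemma ord_two_exponent_eq_1_if_dvd_pow_plus_1:
  fixes l q j a d :: nat
  assumes "prime l" "odd l" "ord l q = 2 ^ a * d" "odd d"
    and "l dvd q ^ j + 1" "odd j"
  shows "a = 1"
proof -
  have "int l dvd int (q ^ j + 1)" using assms(5) by (simp only: int_dvd_int_iff)
  then have minus_1: "[int q ^ j = -1] (mod int l)" by (simp add: cong_iff_dvd_diff add.commute)
  then have "[int q ^ (j * 2) = 1] (mod int l)"
    using cong_pow[OF minus_1, of 2] by (simp add: power_mult)
  then have "ord l q dvd j * 2"
    by (simp add: ord_divides[symmetric] flip: cong_int_iff)
  moreover have "\<not> ord l q dvd j"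
  proof
    assume "ord l q dvd j"
    then have "[int q ^ j = 1] (mod int l)" by (simp add: ord_divides[symmetric] flip: cong_int_iff)
    then have "[1 = -1] (mod int l)" using minus_1 by (metis cong_sym cong_trans)
    then have "int l dvd int 2" by (simp add: cong_iff_dvd_diff)
    then have "l dvd 2" by (simp only: int_dvd_int_iff)
    then have "l = 2" using primes_dvd_imp_eq[OF assms(1) two_is_prime_nat] by blast
    then show False using assms(2) by simp
  qed
  show ?thesis
  proof (rule ccontr)
    assume "a \<noteq> 1"
    then consider "a = 0" | "a \<ge> 2" by linarith
    then show False
    proof cases
      case 1
      moreover have "coprime d 2" using assms(4) by simp
      ultimately show False
        using \<open>ord l q dvd j * 2\<close> \<open>\<not> ord l q dvd j\<close> assms(3)
        by (simp add: coprime_dvd_mult_left_iff)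
    next
      case 2
      then have "(2::nat) ^ 2 dvd 2 ^ a" by (rule le_imp_power_dvd)
      then have "2 ^ 2 dvd ord l q" using assms(3) by (simp add: dvd_mult2)
      then have "2 * 2 dvd j * 2" using \<open>ord l q dvd j * 2\<close> by (simp add: power2_eq_square dvd_trans)
      then show False using assms(6) by auto
    qed
  qed
qed

lemma prime_power_dvd_pow_plus_1:
  fixes l q d r :: nat
  assumes "prime l" "odd l" "coprime l q" "ord l q = 2 * d" "r > 0"
  shows "l ^ r dvd q ^ (d * l ^ (r - 1)) + 1"
proof -
  have "int l dvd int (q ^ d + 1)"
    using prime_dvd_pow_half_ord_plus_1[OF assms(1,3,4)] by (simp only: int_dvd_int_iff)
  then have "int l ^ Suc (r - 1) dvd int (q ^ d) ^ (l ^ (r - 1)) + 1"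
    using assms(2) by (intro lifting_the_exponent) (simp_all add: add.commute)
  then have "int (l ^ r) dvd int (q ^ (d * l ^ (r - 1)) + 1)"
    using assms(5) by (simp add: power_mult add.commute)
  then show ?thesis by (simp only: int_dvd_int_iff)
qed

lemma exists_odd_exponent_prod_dvd_pow_plus_1:
  fixes l r d :: "nat \<Rightarrow> nat" and q :: nat and I :: "nat set"
  assumes "finite I" "inj_on l I"
    and l: "\<And>i. i \<in> I \<Longrightarrow> prime (l i) \<and> odd (l i) \<and> coprime (l i) q"
    and "\<And>i. i \<in> I \<Longrightarrow> r i > 0"
    and ord: "\<And>i. i \<in> I \<Longrightarrow> ord (l i) q = 2 * d i \<and> odd (d i)"
  shows "\<exists>J. odd J \<and> (\<Prod>i\<in>I. l i ^ r i) dvd q ^ J + 1"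
proof -
  define j where "j i = d i * l i ^ (r i - 1)" for i
  have odd_j: "odd (j i)" if "i \<in> I" for i using l[OF that] ord[OF that] by (simp add: j_def)
  define J where "J = (\<Prod>i\<in>I. j i)"
  have "odd J" unfolding J_def using \<open>finite I\<close> odd_j by (induct I rule: finite_induct) auto
  have "[q ^ J + 1 = 0] (mod (\<Prod>i\<in>I. l i ^ r i))"
  proof (rule coprime_cong_prod_nat)
    fix i i' assume "i \<in> I" "i' \<in> I" "i \<noteq> i'"
    then have "l i \<noteq> l i'" using \<open>inj_on l I\<close> by (auto dest: inj_onD)
    then show "coprime (l i ^ r i) (l i' ^ r i')"
      using l[OF \<open>i \<in> I\<close>] l[OF \<open>i' \<in> I\<close>] by (simp add: primes_coprime)
  next
    fix i assume "i \<in> I"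
    have J_eq: "J = j i * (\<Prod>i'\<in>I - {i}. j i')"
      unfolding J_def using \<open>finite I\<close> \<open>i \<in> I\<close> by (rule prod.remove)
    have "l i ^ r i dvd q ^ j i + 1"
      using prime_power_dvd_pow_plus_1 l[OF \<open>i \<in> I\<close>] ord[OF \<open>i \<in> I\<close>] assms(4)[OF \<open>i \<in> I\<close>]
      by (simp add: j_def)
    moreover have "odd (\<Prod>i'\<in>I - {i}. j i')"
      using \<open>odd J\<close> J_eq by simp
    ultimately have "l i ^ r i dvd q ^ (j i * (\<Prod>i'\<in>I - {i}. j i')) + 1"
      by (rule dvd_pow_odd_mult_plus_1)
    then show "[q ^ J + 1 = 0] (mod l i ^ r i)" by (simp only: cong_0_iff J_eq)
  qed
  then show ?thesis using \<open>odd J\<close> by (auto simp: cong_0_iff)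
qed

lemma gcd_prod_prime_powers_dvd:
  fixes l r :: "'a \<Rightarrow> nat" and x :: nat
  assumes "finite I" "S \<subseteq> I" "\<And>i. i \<in> I \<Longrightarrow> prime (l i)"
    and "\<And>i. i \<in> I - S \<Longrightarrow> \<not> l i dvd x"
  shows "gcd (\<Prod>i\<in>I. l i ^ r i) x dvd (\<Prod>i\<in>S. l i ^ r i)"
proof -
  have split: "(\<Prod>i\<in>I. l i ^ r i) = (\<Prod>i\<in>I - S. l i ^ r i) * (\<Prod>i\<in>S. l i ^ r i)"
    using prod.subset_diff[OF assms(2,1)] .
  have "coprime (l i ^ r i) x" if "i \<in> I - S" for i
    using assms(3,4) that by (simp add: prime_imp_coprime)
  then have "coprime (\<Prod>i\<in>I - S. l i ^ r i) x" by (rule prod_coprime_left)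
  then have "coprime x (\<Prod>i\<in>I - S. l i ^ r i)" by (simp add: coprime_commute)
  then have "coprime (gcd (\<Prod>i\<in>I. l i ^ r i) x) (\<Prod>i\<in>I - S. l i ^ r i)"
    by (rule coprime_divisors[OF gcd_dvd2 dvd_refl])
  moreover have "gcd (\<Prod>i\<in>I. l i ^ r i) x dvd (\<Prod>i\<in>I - S. l i ^ r i) * (\<Prod>i\<in>S. l i ^ r i)"
    by (simp flip: split)
  ultimately show ?thesis by (simp add: coprime_dvd_mult_right_iff)
qed

section \<open>SCRIM divisors of \<open>x ^ n - 1\<close> over a field with \<open>q\<^sup>2\<close> elements\<close>

lemma CHAR_eq_if_card_eq_prime_power:
  assumes "card (UNIV :: 'a::{finite,field} set) = p ^ m" "prime p"
  shows "CHAR('a) = p"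
proof -
  have "prime CHAR('a)" by (simp add: finite_imp_CHAR_pos prime_CHAR_semidom)
  moreover have "CHAR('a) dvd p ^ m" using CHAR_dvd_CARD[where 'a='a] assms(1) by simp
  ultimately show ?thesis using assms(2) by (metis prime_dvd_power primes_dvd_imp_eq)
qed

lemma Omega_mono:
  assumes "m dvd n"
  shows "Omega q m \<subseteq> Omega q n"
  using dvd_trans[OF _ x_pow_minus_1_dvd[OF assms]] by (auto simp: Omega_def)

context
  fixes q k :: nat
  assumes card_F: "card (UNIV :: 'F::{finite,field} set) = q ^ 2"
    and q_CHAR_power: "q = CHAR('F) ^ k"
begin

lemma prime_CHAR_F: "prime CHAR('F)"
  by (simp add: finite_imp_CHAR_pos prime_CHAR_semidom)

lemma q_ge_2: "q \<ge> 2"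
proof -
  have "card {0, 1 :: 'F} \<le> q ^ 2" unfolding card_F[symmetric] by (rule card_mono) simp_all
  then have "2 \<le> q ^ 2" by simp
  then show ?thesis by (cases "q \<le> 1") (auto simp: le_Suc_eq)
qed

lemma of_nat_neq_0_if_coprime: "coprime e q \<Longrightarrow> of_nat e \<noteq> (0 :: 'F alg_closure)"
proof -
  have "k > 0" using q_ge_2 q_CHAR_power by (cases k) auto
  then have "CHAR('F) dvd q" using q_CHAR_power by simp
  moreover assume "coprime e q"
  ultimately show ?thesis
    using prime_CHAR_F by (auto simp: of_nat_eq_0_iff_char_dvd dest: coprime_common_divisor)
qed

lemma frobenius_hom: "comm_ring_hom (\<lambda>x::'F alg_closure. x ^ q ^ i)"
  using frobenius_comm_ring_hom[where 'a="'F alg_closure", of "k * i"] prime_CHAR_F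
  by (simp add: q_CHAR_power power_mult)

lemma pow_card_F: "(x::'F) ^ q ^ 2 = x"
proof (cases "x = 0")
  case False
  have "(\<Prod>y\<in>UNIV - {0}. x * y) = (\<Prod>y\<in>UNIV - {0::'F}. y)"
    by (rule prod.reindex_bij_witness[of _ "\<lambda>y. y / x" "\<lambda>y. x * y"]) (use False in auto)
  then have "x ^ (q ^ 2 - 1) * (\<Prod>y\<in>UNIV - {0::'F}. y) = (\<Prod>y\<in>UNIV - {0::'F}. y)"
    by (simp add: prod.distrib card_F)
  then have "x ^ (q ^ 2 - 1) = 1" by simp
  moreover have "x ^ q ^ 2 = x * x ^ (q ^ 2 - 1)" using q_ge_2 by (subst power_eq_if) simp
  ultimately show ?thesis by simp
qed (use q_ge_2 in simp)

lemma pow_card_F_power: "(x::'F) ^ (q ^ 2) ^ i = x"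
proof (induct i)
  case (Suc i)
  have "x ^ (q ^ 2) ^ Suc i = (x ^ (q ^ 2) ^ i) ^ q ^ 2" by (simp only: power_Suc2 power_mult)
  then show ?case using Suc pow_card_F by simp
qed simp

lemma range_to_ac_iff: "(z::'F alg_closure) ^ q ^ 2 = z \<longleftrightarrow> z \<in> range to_ac"
proof
  define p :: "'F alg_closure poly" where "p = monom 1 (q ^ 2) - [:0, 1:]"
  have roots: "{z. poly p z = 0} = {z. z ^ q ^ 2 = z}" by (simp add: p_def poly_monom)
  have "coeff p (q ^ 2) = 1" using q_ge_2 by (simp add: p_def coeff_pCons split: nat.split)
  then have "p \<noteq> 0" by auto
  have "degree p \<le> q ^ 2"
    unfolding p_def using q_ge_2 by (intro degree_diff_le) (auto simp: degree_monom_le)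
  have sub: "range to_ac \<subseteq> {z::'F alg_closure. z ^ q ^ 2 = z}"
    by (auto simp flip: to_ac_power simp: pow_card_F)
  have "card (range (to_ac :: 'F \<Rightarrow> _)) = q ^ 2"
    by (simp add: card_image inj_to_ac card_F)
  also have "\<dots> \<ge> card {z::'F alg_closure. z ^ q ^ 2 = z}"
    using card_poly_roots_bound[OF \<open>p \<noteq> 0\<close>] \<open>degree p \<le> q ^ 2\<close> roots by simp
  moreover have "finite {z::'F alg_closure. z ^ q ^ 2 = z}"
    using poly_roots_finite[OF \<open>p \<noteq> 0\<close>] roots by simp
  ultimately have "range to_ac = {z::'F alg_closure. z ^ q ^ 2 = z}"
    using sub by (simp add: card_seteq)
  then show "z \<in> range to_ac" if "z ^ q ^ 2 = z" using that by blast
qed (auto simp flip: to_ac_power simp: pow_card_F)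

lemma frobenius_fixed_poly_descends:
  assumes "map_poly (\<lambda>x. x ^ q ^ 2) h = (h :: 'F alg_closure poly)"
  shows "map_poly to_ac (map_poly of_ac h) = h"
proof (rule poly_eqI)
  fix n
  have "coeff h n ^ q ^ 2 = coeff h n"
    using arg_cong[OF assms, of "\<lambda>p. coeff p n"] q_ge_2 by (simp add: coeff_map_poly)
  then show "coeff (map_poly to_ac (map_poly of_ac h)) n = coeff h n"
    by (simp add: coeff_map_poly range_to_ac_iff to_ac_of_ac)
qed

lemma frobenius_ac_root:
  assumes "z \<in> ac_roots (f :: 'F poly)"
  shows "z ^ (q ^ 2) ^ i \<in> ac_roots f"
proof -
  interpret frob: comm_ring_hom "\<lambda>x::'F alg_closure. x ^ (q ^ 2) ^ i"
    using frobenius_hom[of "2 * i"] by (simp add: power_mult)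
  have "map_poly (\<lambda>x. x ^ (q ^ 2) ^ i) (map_poly to_ac f) = map_poly to_ac f"
    by (rule poly_eqI) (simp add: coeff_map_poly pow_card_F_power flip: to_ac_power)
  then show ?thesis
    using frob.poly_map_poly[of "map_poly to_ac f" z] assms by (simp add: ac_roots_def)
qed

lemma frobenius_fixes_conjugate_product:
  assumes "\<alpha> ^ (q ^ 2) ^ m = (\<alpha> :: 'F alg_closure)"
  defines "g \<equiv> \<lambda>i. [:- (\<alpha> ^ (q ^ 2) ^ i), 1:]"
  shows "map_poly (\<lambda>x. x ^ q ^ 2) (\<Prod>i<m. g i) = (\<Prod>i<m. g i)"
proof -
  interpret frob: comm_ring_hom "\<lambda>x::'F alg_closure. x ^ q ^ 2"
    by (rule frobenius_hom)
  have "(\<alpha> ^ (q ^ 2) ^ i) ^ q ^ 2 = \<alpha> ^ (q ^ 2) ^ Suc i" for i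
    by (simp only: power_Suc2 power_mult)
  then have "map_poly (\<lambda>x. x ^ q ^ 2) (\<Prod>i<m. g i) = (\<Prod>i<m. g (Suc i))"
    by (simp add: g_def frob.map_poly_prod frob.map_poly_linear frob.hom_uminus)
  moreover have "g 0 * (\<Prod>i<m. g (Suc i)) = g 0 * (\<Prod>i<m. g i)"
    using prod.lessThan_Suc_shift[of g m] prod.lessThan_Suc[of g m] assms(1)
    by (simp add: g_def mult.commute)
  moreover have "g 0 \<noteq> 0" by (simp add: g_def)
  ultimately show ?thesis by simp
qed

text \<open>The product of the distinct Frobenius conjugates of \<open>\<alpha>\<close> is Frobenius-invariant, hence
  defined over \<open>'F\<close> and divisible by \<open>f\<close>; its degree is at most that of \<open>f\<close>, whose roots
  include all these conjugates.\<close>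

lemma map_poly_to_ac_eq_conjugate_product:
  fixes f :: "'F poly"
  assumes f: "irreducible f" "lead_coeff f = 1"
    and \<alpha>: "\<alpha> \<in> ac_roots f" "\<alpha> \<in> primitive_roots_of_unity e" and "coprime e q"
  shows "map_poly to_ac f = (\<Prod>i<ord e (q ^ 2). [:- (\<alpha> ^ (q ^ 2) ^ i), 1:])"
    and "inj_on (\<lambda>i. \<alpha> ^ (q ^ 2) ^ i) {..<ord e (q ^ 2)}"
proof -
  define m where "m = ord e (q ^ 2)"
  define h where "h = (\<Prod>i<m. [:- (\<alpha> ^ (q ^ 2) ^ i), 1:])"
  have "e > 0" using \<open>coprime e q\<close> q_ge_2 by (cases "e = 0") auto
  have "coprime e (q ^ 2)" using \<open>coprime e q\<close> by simp
  then have "m > 0" by (simp add: m_def)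
  have conj_eq: "\<alpha> ^ (q ^ 2) ^ i = \<alpha> ^ (q ^ 2) ^ j \<longleftrightarrow> [i = j] (mod m)" for i j
    unfolding m_def by (rule frobenius_conjugates_eq_iff[OF \<alpha>(2) \<open>e > 0\<close> \<open>coprime e (q ^ 2)\<close>])
  show inj: "inj_on (\<lambda>i. \<alpha> ^ (q ^ 2) ^ i) {..<ord e (q ^ 2)}"
    by (intro inj_onI) (auto simp: conj_eq cong_less_modulus_unique_nat m_def)
  have "\<alpha> ^ (q ^ 2) ^ m = \<alpha> ^ (q ^ 2) ^ 0" by (simp only: conj_eq cong_def mod_self) simp
  then have "map_poly (\<lambda>x. x ^ q ^ 2) h = h"
    unfolding h_def by (intro frobenius_fixes_conjugate_product) simp
  then have h: "map_poly to_ac (map_poly of_ac h) = h" by (rule frobenius_fixed_poly_descends)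
  define h\<^sub>0 where "h\<^sub>0 = map_poly of_ac h"
  have "\<alpha> \<in> ac_roots h\<^sub>0"
    using \<open>m > 0\<close> h
    by (auto simp: ac_roots_def h\<^sub>0_def h_def poly_prod prod_zero_iff intro!: bexI[of _ 0])
  then have "f dvd h\<^sub>0" by (rule irreducible_dvd_if_common_root[OF f(1) \<alpha>(1)])
  have "m = card ((\<lambda>i. \<alpha> ^ (q ^ 2) ^ i) ` {..<m})" using inj by (simp add: card_image m_def)
  also have "\<dots> \<le> card (ac_roots f)"
    using frobenius_ac_root[OF \<alpha>(1)] f(1)
    by (intro card_mono finite_ac_roots) auto
  also have "\<dots> \<le> degree f" using f(1) by (intro card_ac_roots_le) auto
  finally have "degree h\<^sub>0 \<le> degree f"
    using arg_cong[OF h, of degree] by (simp add: h_def degree_prod_sum_eq h\<^sub>0_def)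
  moreover have "lead_coeff h\<^sub>0 = 1"
    using arg_cong[OF h, of lead_coeff] by (simp add: h\<^sub>0_def h_def lead_coeff_prod lead_coeff_map_poly_nz)
  ultimately have "f = h\<^sub>0"
    using monic_dvd_imp_eq[OF \<open>f dvd h\<^sub>0\<close>] f(2) by fastforce
  then show "map_poly to_ac f = (\<Prod>i<ord e (q ^ 2). [:- (\<alpha> ^ (q ^ 2) ^ i), 1:])"
    using h by (simp add: h\<^sub>0_def h_def m_def)
qed

lemma ac_roots_irreducible_factor:
  fixes f :: "'F poly"
  assumes "irreducible f" "lead_coeff f = 1"
    and "\<alpha> \<in> ac_roots f" "\<alpha> \<in> primitive_roots_of_unity e" "coprime e q"
  shows "ac_roots f = (\<lambda>i. \<alpha> ^ (q ^ 2) ^ i) ` {..<ord e (q ^ 2)}"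
    and "card (ac_roots f) = ord e (q ^ 2)"
    and "ac_roots f \<subseteq> primitive_roots_of_unity e"
proof -
  note conj = map_poly_to_ac_eq_conjugate_product[OF assms]
  show roots: "ac_roots f = (\<lambda>i. \<alpha> ^ (q ^ 2) ^ i) ` {..<ord e (q ^ 2)}"
    by (auto simp: ac_roots_def conj(1) poly_prod prod_zero_iff)
  then show "card (ac_roots f) = ord e (q ^ 2)" by (simp add: card_image conj(2))
  have "coprime ((q ^ 2) ^ i) e" for i using assms(5) by (simp add: coprime_commute)
  then show "ac_roots f \<subseteq> primitive_roots_of_unity e"
    unfolding roots using assms(4) by (auto intro: primitive_root_pow_coprime)
qed

lemma map_poly_to_ac_conj_poly:
  "map_poly to_ac (conj_poly q g) = map_poly (\<lambda>x. x ^ q) (map_poly to_ac (g :: 'F poly))"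
  using q_ge_2 by (simp add: conj_poly_def map_poly_map_poly comp_def)

lemma dagger_poly_ac_root:
  fixes f :: "'F poly"
  assumes "\<alpha> \<noteq> 0" "\<alpha> \<in> ac_roots f"
  shows "inverse \<alpha> ^ q \<in> ac_roots (dagger_poly q f)"
proof -
  interpret frob: comm_ring_hom "\<lambda>x::'F alg_closure. x ^ q"
    using frobenius_hom[of 1] by simp
  have "inverse \<alpha> \<in> ac_roots (recip_poly f)"
    using assms by (simp add: ac_roots_def recip_poly_def map_poly_smult poly_reflect_poly_nz
        map_poly_to_ac_reflect_poly)
  then show ?thesis
    using frob.poly_map_poly[of "map_poly to_ac (recip_poly f)" "inverse \<alpha>"]
    by (simp add: ac_roots_def dagger_poly_def map_poly_to_ac_conj_poly)
qed

lemma inverse_pow_eq_conjugate_iff: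
  assumes \<alpha>: "(\<alpha> :: 'F alg_closure) \<in> primitive_roots_of_unity e" and "coprime e q" "i > 0"
  shows "inverse \<alpha> ^ q = \<alpha> ^ (q ^ 2) ^ i \<longleftrightarrow> e dvd q ^ (2 * i - 1) + 1"
proof -
  have "e > 0" using \<open>coprime e q\<close> q_ge_2 by (cases "e = 0") auto
  then have "\<alpha> \<noteq> 0" using primitive_root_pow_eq_1_iff[OF \<alpha>, of e] by (auto simp: power_0_left)
  have "(q ^ 2) ^ i + q = q * (q ^ (2 * i - 1) + 1)"
    using \<open>i > 0\<close> by (cases i) (simp_all add: algebra_simps flip: power_mult power_Suc)
  then have "inverse \<alpha> ^ q = \<alpha> ^ (q ^ 2) ^ i \<longleftrightarrow> \<alpha> ^ (q * (q ^ (2 * i - 1) + 1)) = 1"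
    using \<open>\<alpha> \<noteq> 0\<close> by (auto simp: field_simps simp flip: power_add)
  also have "\<dots> \<longleftrightarrow> e dvd q * (q ^ (2 * i - 1) + 1)" by (rule primitive_root_pow_eq_1_iff[OF \<alpha>])
  also have "\<dots> \<longleftrightarrow> e dvd q ^ (2 * i - 1) + 1"
    using \<open>coprime e q\<close> by (rule coprime_dvd_mult_right_iff)
  finally show ?thesis .
qed

lemma SCRIM_iff_dvd_pow_plus_1:
  fixes f :: "'F poly"
  assumes f: "irreducible f" "lead_coeff f = 1"
    and \<alpha>: "\<alpha> \<in> ac_roots f" "\<alpha> \<in> primitive_roots_of_unity e" and "coprime e q"
  shows "SCRIM q f \<longleftrightarrow> (\<exists>j. odd j \<and> e dvd q ^ j + 1)"
proof -
  have "e > 0" using \<open>coprime e q\<close> q_ge_2 by (cases "e = 0") auto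
  then have "\<alpha> \<noteq> 0" using primitive_root_pow_eq_1_iff[OF \<alpha>(2), of e] by (auto simp: power_0_left)
  have "\<alpha> \<in> ac_roots (monom 1 e - 1)"
    using primitive_root_pow_eq_1_iff[OF \<alpha>(2), of e] by (simp add: ac_roots_x_pow_minus_1)
  then have "f dvd monom 1 e - 1" by (rule irreducible_dvd_if_common_root[OF f(1) \<alpha>(1)])
  moreover have "poly (monom 1 e - 1) (0::'F) \<noteq> 0" using \<open>e > 0\<close> by (simp add: poly_monom power_0_left)
  ultimately have "poly f 0 \<noteq> 0" by (metis dvdE mult_zero_left poly_mult)
  then have "coeff f 0 \<noteq> 0" by (simp add: poly_0_coeff_0)
  note dagger = dagger_poly_monic[OF this, of q] dagger_poly_ac_root[OF \<open>\<alpha> \<noteq> 0\<close> \<alpha>(1)]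
  note conj_iff = inverse_pow_eq_conjugate_iff[OF \<alpha>(2) \<open>coprime e q\<close>]
  show ?thesis
  proof
    assume "SCRIM q f"
    then have "inverse \<alpha> ^ q \<in> ac_roots f" using dagger(3) by (simp add: SCRIM_def)
    then obtain i where "inverse \<alpha> ^ q = \<alpha> ^ (q ^ 2) ^ i"
      using ac_roots_irreducible_factor(1)[OF f \<alpha> \<open>coprime e q\<close>] by blast
    also have "\<dots> = \<alpha> ^ (q ^ 2) ^ (i + ord e (q ^ 2))"
      using frobenius_conjugates_eq_iff[OF \<alpha>(2) \<open>e > 0\<close>] \<open>coprime e q\<close>
      by (simp add: cong_def)
    finally have "e dvd q ^ (2 * (i + ord e (q ^ 2)) - 1) + 1"
      using \<open>coprime e q\<close> q_ge_2 conj_iff by (simp add: ord_eq_0)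
    then show "\<exists>j. odd j \<and> e dvd q ^ j + 1"
      using \<open>coprime e q\<close> q_ge_2 by (intro exI[of _ "2 * (i + ord e (q ^ 2)) - 1"]) (simp add: ord_eq_0)
  next
    assume "\<exists>j. odd j \<and> e dvd q ^ j + 1"
    then obtain j where "odd j" "e dvd q ^ j + 1" by blast
    moreover have "2 * Suc (j div 2) - 1 = j" using odd_two_times_div_two_succ[OF \<open>odd j\<close>] by simp
    ultimately have "inverse \<alpha> ^ q = \<alpha> ^ (q ^ 2) ^ Suc (j div 2)"
      using conj_iff[OF zero_less_Suc, of "j div 2"] by simp
    then have "inverse \<alpha> ^ q \<in> ac_roots f"
      using frobenius_ac_root[OF \<alpha>(1)] by metis
    then have "f dvd dagger_poly q f"
      by (rule irreducible_dvd_if_common_root[OF f(1) _ dagger(3)])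
    then have "f = dagger_poly q f"
      using dagger(1,2) f(2) q_ge_2 by (intro monic_dvd_imp_eq) force+
    then show "SCRIM q f" using f \<open>coeff f 0 \<noteq> 0\<close> by (simp add: SCRIM_def)
  qed
qed

lemma totient_eq_card_factors_mult_ord:
  assumes "n > 0" "coprime n q" "e dvd n"
  defines "M \<equiv> monic_irreducible_divisors (monom 1 n - 1 :: 'F poly)"
  shows "totient e = card {f \<in> M. ac_roots f \<subseteq> primitive_roots_of_unity e} * ord e (q ^ 2)"
proof -
  define M\<^sub>e where "M\<^sub>e = {f \<in> M. ac_roots f \<subseteq> primitive_roots_of_unity e}"
  have "coprime e q" using coprime_divisors[OF assms(3) dvd_refl assms(2)] .
  have M: "irreducible f" "lead_coeff f = 1" "f dvd monom 1 n - 1" if "f \<in> M" for f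
    using that by (simp_all add: M_def monic_irreducible_divisors_def)
  have "finite M" unfolding M_def by (intro finite_monic_irreducible_divisors x_pow_minus_1_neq_0 assms)
  then have "finite M\<^sub>e" by (simp add: M\<^sub>e_def)
  have prim_eq: "primitive_roots_of_unity e = (\<Union>f\<in>M\<^sub>e. ac_roots f)"
  proof (intro equalityI subsetI)
    fix z :: "'F alg_closure"
    assume z: "z \<in> primitive_roots_of_unity e"
    then have "z \<in> ac_roots (monom 1 n - 1)"
      using assms(3) by (simp add: ac_roots_x_pow_minus_1 primitive_root_pow_eq_1_iff)
    with x_pow_minus_1_neq_0[OF assms(1)] obtain f
      where f: "lead_coeff f = 1" "irreducible f" "f dvd monom 1 n - 1" "z \<in> ac_roots f"
      by (rule exists_monic_irreducible_factor_root)
    then have "ac_roots f \<subseteq> primitive_roots_of_unity e"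
      using ac_roots_irreducible_factor(3)[OF f(2,1,4) z \<open>coprime e q\<close>] by simp
    with f show "z \<in> (\<Union>f\<in>M\<^sub>e. ac_roots f)"
      by (auto simp: M\<^sub>e_def M_def monic_irreducible_divisors_def)
  qed (auto simp: M\<^sub>e_def)
  have card_roots: "card (ac_roots f) = ord e (q ^ 2)" if f: "f \<in> M\<^sub>e" for f
  proof -
    have "f \<in> M" using f by (simp add: M\<^sub>e_def)
    then obtain \<alpha> where "\<alpha> \<in> ac_roots f" using M(1) ac_roots_irreducible_nonempty by blast
    with f show ?thesis
      using ac_roots_irreducible_factor(2)[OF M(1,2) \<open>\<alpha> \<in> ac_roots f\<close> _ \<open>coprime e q\<close>]
      by (auto simp: M\<^sub>e_def)
  qed
  have "totient e = card (primitive_roots_of_unity e :: 'F alg_closure set)"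
    using card_primitive_roots_of_unity[OF of_nat_neq_0_if_coprime[OF \<open>coprime e q\<close>]]
    by simp
  also have "\<dots> = (\<Sum>f\<in>M\<^sub>e. card (ac_roots f))"
    unfolding prim_eq
  proof (rule card_UN_disjoint[OF \<open>finite M\<^sub>e\<close>])
    show "\<forall>f\<in>M\<^sub>e. finite (ac_roots f)"
    proof
      fix f assume "f \<in> M\<^sub>e"
      then have "f \<noteq> 0" using M(1)[of f] by (auto simp: M\<^sub>e_def)
      then show "finite (ac_roots f)" by (rule finite_ac_roots)
    qed
    show "\<forall>f\<in>M\<^sub>e. \<forall>g\<in>M\<^sub>e. f \<noteq> g \<longrightarrow> ac_roots f \<inter> ac_roots g = {}"
    proof (intro ballI impI)
      fix f g assume "f \<in> M\<^sub>e" "g \<in> M\<^sub>e" "f \<noteq> g"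
      then have "f \<in> M" "g \<in> M" by (simp_all add: M\<^sub>e_def)
      then show "ac_roots f \<inter> ac_roots g = {}"
        using monic_irreducible_eq_if_common_root[OF M(1,2)[OF \<open>f \<in> M\<close>] M(1,2)[OF \<open>g \<in> M\<close>]]
          \<open>f \<noteq> g\<close> by blast
    qed
  qed
  also have "\<dots> = card M\<^sub>e * ord e (q ^ 2)" by (simp add: card_roots)
  finally show ?thesis by (simp add: M\<^sub>e_def)
qed

lemma card_monic_irreducible_divisors_x_pow_minus_1:
  assumes "n > 0" "coprime n q"
  shows "real (card (monic_irreducible_divisors (monom 1 n - 1 :: 'F poly)))
           = (\<Sum>e | e dvd n. real (totient e) / real (ord e (q ^ 2)))"
proof -
  define M where "M = monic_irreducible_divisors (monom 1 n - 1 :: 'F poly)"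
  define M' where "M' = (\<lambda>e. {f \<in> M. ac_roots f \<subseteq> primitive_roots_of_unity e})"
  have M: "irreducible f" "lead_coeff f = 1" "f dvd monom 1 n - 1" if "f \<in> M" for f
    using that by (simp_all add: M_def monic_irreducible_divisors_def)
  have "finite M" unfolding M_def by (intro finite_monic_irreducible_divisors x_pow_minus_1_neq_0 assms(1))
  have M_eq: "M = (\<Union>e\<in>{e. e dvd n}. M' e)"
  proof (intro equalityI subsetI)
    fix f assume "f \<in> M"
    then obtain \<alpha> where \<alpha>: "\<alpha> \<in> ac_roots f" using M(1) ac_roots_irreducible_nonempty by blast
    then have "\<alpha> ^ n = 1"
      using ac_roots_mono[OF M(3)[OF \<open>f \<in> M\<close>]] by (auto simp: ac_roots_x_pow_minus_1)
    then obtain e where "e dvd n" "\<alpha> \<in> primitive_roots_of_unity e"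
      using assms(1) by (rule primitive_root_of_unity_exists)
    moreover have "coprime e q" using coprime_divisors[OF \<open>e dvd n\<close> dvd_refl assms(2)] .
    ultimately have "ac_roots f \<subseteq> primitive_roots_of_unity e"
      using ac_roots_irreducible_factor(3)[OF M(1,2)[OF \<open>f \<in> M\<close>] \<alpha>] by blast
    with \<open>f \<in> M\<close> \<open>e dvd n\<close> show "f \<in> (\<Union>e\<in>{e. e dvd n}. M' e)" by (auto simp: M'_def)
  qed (auto simp: M'_def)
  have "card M = (\<Sum>e | e dvd n. card (M' e))"
    unfolding M_eq
  proof (rule card_UN_disjoint)
    show "finite {e. e dvd n}" using assms(1) by simp
    show "\<forall>e\<in>{e. e dvd n}. finite (M' e)" using \<open>finite M\<close> by (simp add: M'_def)
    show "\<forall>e\<in>{e. e dvd n}. \<forall>e'\<in>{e. e dvd n}. e \<noteq> e' \<longrightarrow> M' e \<inter> M' e' = {}"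
    proof (intro ballI impI)
      fix e e' :: nat assume "e \<noteq> e'"
      have False if "f \<in> M' e" "f \<in> M' e'" for f
      proof -
        have "ac_roots f = {}"
          using that primitive_roots_of_unity_disjoint[OF \<open>e \<noteq> e'\<close>] by (auto simp: M'_def)
        moreover have "f \<in> M" using that by (simp add: M'_def)
        ultimately show False using M(1) ac_roots_irreducible_nonempty by blast
      qed
      then show "M' e \<inter> M' e' = {}" by blast
    qed
  qed
  then have "real (card M) = (\<Sum>e | e dvd n. real (card (M' e)))" by simp
  also have "\<dots> = (\<Sum>e | e dvd n. real (totient e) / real (ord e (q ^ 2)))"
  proof (rule sum.cong)
    fix e assume "e \<in> {e. e dvd n}"
    then have "e dvd n" by simp
    have "ord e (q ^ 2) > 0" using coprime_divisors[OF \<open>e dvd n\<close> dvd_refl assms(2)] by simp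
    then show "real (card (M' e)) = real (totient e) / real (ord e (q ^ 2))"
      using totient_eq_card_factors_mult_ord[OF assms \<open>e dvd n\<close>]
      by (simp add: M'_def M_def)
  qed simp
  finally show ?thesis by (simp add: M_def)
qed

lemma SCRIM_iff_root_order:
  fixes f :: "'F poly"
  assumes "n > 0" "coprime n q" "f \<in> monic_irreducible_divisors (monom 1 n - 1)"
  obtains e \<alpha> where "e dvd n" "\<alpha> \<in> ac_roots f" "\<alpha> \<in> primitive_roots_of_unity e"
    and "SCRIM q f \<longleftrightarrow> (\<exists>j. odd j \<and> e dvd q ^ j + 1)"
proof -
  have f: "irreducible f" "lead_coeff f = 1" "f dvd monom 1 n - 1"
    using assms(3) by (simp_all add: monic_irreducible_divisors_def)
  obtain \<alpha> where \<alpha>: "\<alpha> \<in> ac_roots f" using f(1) ac_roots_irreducible_nonempty by blast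
  then have "\<alpha> ^ n = 1" using ac_roots_mono[OF f(3)] by (auto simp: ac_roots_x_pow_minus_1)
  then obtain e where "e dvd n" "\<alpha> \<in> primitive_roots_of_unity e"
    using assms(1) by (rule primitive_root_of_unity_exists)
  moreover have "coprime e q" using coprime_divisors[OF \<open>e dvd n\<close> dvd_refl assms(2)] .
  ultimately show ?thesis
    using that \<alpha> SCRIM_iff_dvd_pow_plus_1[OF f(1,2) \<alpha>] by simp
qed

lemma Omega_eq_monic_irreducible_divisors:
  assumes "n > 0" "coprime n q" "odd j" "n dvd q ^ j + 1"
  shows "(Omega q n :: 'F poly set) = monic_irreducible_divisors (monom 1 n - 1)"
proof (intro equalityI subsetI)
  fix f :: "'F poly"
  assume f: "f \<in> monic_irreducible_divisors (monom 1 n - 1)"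
  obtain e \<alpha> where "e dvd n" "SCRIM q f \<longleftrightarrow> (\<exists>j. odd j \<and> e dvd q ^ j + 1)"
    by (rule SCRIM_iff_root_order[OF assms(1,2) f])
  moreover have "e dvd q ^ j + 1" using \<open>e dvd n\<close> assms(4) by (rule dvd_trans)
  ultimately have "SCRIM q f" using assms(3) by blast
  with f show "f \<in> Omega q n" by (simp add: Omega_def monic_irreducible_divisors_def)
qed (auto simp: Omega_def SCRIM_def monic_irreducible_divisors_def)

lemma Omega_subset_if_gcd_dvd:
  assumes "n > 0" "coprime n q" "\<And>j. odd j \<Longrightarrow> gcd n (q ^ j + 1) dvd m"
  shows "(Omega q n :: 'F poly set) \<subseteq> Omega q m"
proof
  fix f :: "'F poly"
  assume "f \<in> Omega q n"
  then have f: "f \<in> monic_irreducible_divisors (monom 1 n - 1)" "SCRIM q f"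
    by (simp_all add: Omega_def SCRIM_def monic_irreducible_divisors_def)
  obtain e \<alpha> where "e dvd n" "\<alpha> \<in> ac_roots f" "\<alpha> \<in> primitive_roots_of_unity e"
    and "SCRIM q f \<longleftrightarrow> (\<exists>j. odd j \<and> e dvd q ^ j + 1)"
    by (rule SCRIM_iff_root_order[OF assms(1,2) f(1)])
  with f(2) obtain j where "odd j" "e dvd q ^ j + 1" by blast
  then have "e dvd gcd n (q ^ j + 1)" using \<open>e dvd n\<close> by simp
  then have "e dvd m" using assms(3)[OF \<open>odd j\<close>] by (rule dvd_trans)
  then have "\<alpha> \<in> ac_roots (monom 1 m - 1)"
    using \<open>\<alpha> \<in> primitive_roots_of_unity e\<close>
    by (simp add: ac_roots_x_pow_minus_1 primitive_root_pow_eq_1_iff)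
  moreover have "irreducible f" using f(1) by (simp add: monic_irreducible_divisors_def)
  ultimately have "f dvd monom 1 m - 1"
    using \<open>\<alpha> \<in> ac_roots f\<close> irreducible_dvd_if_common_root by blast
  with \<open>f \<in> Omega q n\<close> show "f \<in> Omega q m" by (simp add: Omega_def)
qed

lemma Omega_one: "(Omega q 1 :: 'F poly set) = {[:-1, 1:]}"
proof -
  have "(Omega q 1 :: 'F poly set) = monic_irreducible_divisors [:-1, 1:]"
    using Omega_eq_monic_irreducible_divisors[of 1 1, unfolded x_pow_1_minus_1] by simp
  also have "\<dots> = {[:-1, 1:]}"
  proof (intro equalityI subsetI)
    fix f assume "f \<in> monic_irreducible_divisors [:-1, 1:]"
    then have "irreducible f" "lead_coeff f = 1" "f dvd [:-1, 1:]"
      by (simp_all add: monic_irreducible_divisors_def)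
    then show "f \<in> {[:-1, 1:]}"
      using irreducible_imp_degree_pos[of f] by (auto intro: monic_dvd_imp_eq)
  qed (simp add: monic_irreducible_divisors_def irreducible_linear_field_poly)
  finally show ?thesis .
qed

lemma Omega_prod_remove_prime_power:
  fixes l r :: "'a \<Rightarrow> nat"
  assumes "finite I" "j \<in> I" "\<And>i. i \<in> I \<Longrightarrow> prime (l i) \<and> coprime (l i) q"
    and "\<And>J. odd J \<Longrightarrow> \<not> l j dvd q ^ J + 1"
  shows "(Omega q (\<Prod>i\<in>I. l i ^ r i) :: 'F poly set) = Omega q (\<Prod>i\<in>I - {j}. l i ^ r i)"
proof
  have "(\<Prod>i\<in>I. l i ^ r i) > 0" using assms(3) by (simp add: prime_gt_0_nat prod_pos)
  moreover have "coprime (\<Prod>i\<in>I. l i ^ r i) q" using assms(3) by (simp add: prod_coprime_left)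
  moreover have "gcd (\<Prod>i\<in>I. l i ^ r i) (q ^ J + 1) dvd (\<Prod>i\<in>I - {j}. l i ^ r i)" if "odd J" for J
    using assms that by (intro gcd_prod_prime_powers_dvd) auto
  ultimately show "(Omega q (\<Prod>i\<in>I. l i ^ r i) :: 'F poly set) \<subseteq> Omega q (\<Prod>i\<in>I - {j}. l i ^ r i)"
    by (rule Omega_subset_if_gcd_dvd)
  show "Omega q (\<Prod>i\<in>I - {j}. l i ^ r i) \<subseteq> Omega q (\<Prod>i\<in>I. l i ^ r i)"
    using assms(1) by (intro Omega_mono prod_dvd_prod_subset) auto
qed

lemma Omega_prod_eq_x_minus_1:
  fixes l r :: "'a \<Rightarrow> nat"
  assumes "finite I" "\<And>i. i \<in> I \<Longrightarrow> prime (l i) \<and> coprime (l i) q"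
    and "\<And>i J. i \<in> I \<Longrightarrow> odd J \<Longrightarrow> \<not> l i dvd q ^ J + 1"
  shows "(Omega q (\<Prod>i\<in>I. l i ^ r i) :: 'F poly set) = {[:-1, 1:]}"
proof
  have "(\<Prod>i\<in>I. l i ^ r i) > 0" using assms(2) by (simp add: prime_gt_0_nat prod_pos)
  moreover have "coprime (\<Prod>i\<in>I. l i ^ r i) q" using assms(2) by (simp add: prod_coprime_left)
  moreover have "gcd (\<Prod>i\<in>I. l i ^ r i) (q ^ J + 1) dvd (\<Prod>i\<in>{}. l i ^ r i)" if "odd J" for J
    using assms that by (intro gcd_prod_prime_powers_dvd) auto
  ultimately have "(Omega q (\<Prod>i\<in>I. l i ^ r i) :: 'F poly set) \<subseteq> Omega q 1"
    by (simp add: Omega_subset_if_gcd_dvd)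
  then show "(Omega q (\<Prod>i\<in>I. l i ^ r i) :: 'F poly set) \<subseteq> {[:-1, 1:]}"
    using Omega_one by simp
  have "Omega q 1 \<subseteq> (Omega q (\<Prod>i\<in>I. l i ^ r i) :: 'F poly set)" by (rule Omega_mono) simp
  then show "{[:-1, 1:]} \<subseteq> (Omega q (\<Prod>i\<in>I. l i ^ r i) :: 'F poly set)"
    using Omega_one by simp
qed

lemma card_Omega_if_dvd_pow_plus_1:
  assumes "n > 0" "coprime n q" "odd J" "n dvd q ^ J + 1"
  shows "real (card (Omega q n :: 'F poly set))
           = (\<Sum>e | e dvd n. real (totient e) / real (ord e (q ^ 2)))"
  using Omega_eq_monic_irreducible_divisors[OF assms]
    card_monic_irreducible_divisors_x_pow_minus_1[OF assms(1,2)] by simp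

end

theorem theorem2p14:
  fixes q t :: nat and l r a d :: "nat \<Rightarrow> nat"
  assumes field_card: "card (UNIV :: 'F::{finite,field} set) = q ^ 2"
    and q_pp: "\<exists>p k. prime p \<and> k > 0 \<and> q = p ^ k"
    and l_inj: "inj_on l {1..t}"
    and l_prime: "\<forall>i\<in>{1..t}. prime (l i) \<and> odd (l i) \<and> coprime (l i) q"
    and r_pos: "\<forall>i\<in>{1..t}. r i > 0"
    and ord_dec: "\<forall>i\<in>{1..t}. ord (l i) q = 2 ^ a i * d i \<and> odd (d i)"
  shows
    "(\<forall>j\<in>{1..t}. (a j = 0 \<or> a j \<ge> 2) \<longrightarrow>
        card (Omega q (\<Prod>i\<in>{1..t}. l i ^ r i) :: 'F poly set)
        = card (Omega q (\<Prod>i\<in>{1..t} - {j}. l i ^ r i) :: 'F poly set))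
   \<and> ((\<forall>i\<in>{1..t}. a i = 1) \<longrightarrow>
        real (card (Omega q (\<Prod>i\<in>{1..t}. l i ^ r i) :: 'F poly set))
        = (\<Sum>e\<in>{e. e dvd (\<Prod>i\<in>{1..t}. l i ^ r i)}. real (totient e) / real (ord e (q ^ 2))))
   \<and> ((\<forall>i\<in>{1..t}. a i \<noteq> 1) \<longrightarrow>
        card (Omega q (\<Prod>i\<in>{1..t}. l i ^ r i) :: 'F poly set) = 1)"
proof -
  obtain p k where "prime p" "q = p ^ k" using q_pp by blast
  then have "CHAR('F) = p"
    using field_card by (intro CHAR_eq_if_card_eq_prime_power[of p "k * 2"]) (simp_all add: power_mult)
  then have q_CHAR_power: "q = CHAR('F) ^ k" using \<open>q = p ^ k\<close> by simp
  have l: "prime (l i) \<and> coprime (l i) q" if "i \<in> {1..t}" for i using l_prime that by simp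
  have not_dvd: "\<not> l i dvd q ^ J + 1" if "i \<in> {1..t}" "a i \<noteq> 1" "odd J" for i J
    using ord_two_exponent_eq_1_if_dvd_pow_plus_1[of "l i" q "a i" "d i" J] l_prime ord_dec that by auto
  show ?thesis
  proof (intro conjI ballI impI)
    fix j assume "j \<in> {1..t}" "a j = 0 \<or> a j \<ge> 2"
    then show "card (Omega q (\<Prod>i\<in>{1..t}. l i ^ r i) :: 'F poly set)
        = card (Omega q (\<Prod>i\<in>{1..t} - {j}. l i ^ r i) :: 'F poly set)"
      by (intro arg_cong[where f = card] Omega_prod_remove_prime_power[OF field_card q_CHAR_power])
        (use l not_dvd in auto)
  next
    assume "\<forall>i\<in>{1..t}. a i = 1"
    then obtain J where "odd J" "(\<Prod>i\<in>{1..t}. l i ^ r i) dvd q ^ J + 1"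
      using exists_odd_exponent_prod_dvd_pow_plus_1[of "{1..t}" l q r d] l_inj l_prime r_pos ord_dec
      by auto
    moreover have "(\<Prod>i\<in>{1..t}. l i ^ r i) > 0" using l by (simp add: prime_gt_0_nat prod_pos)
    moreover have "coprime (\<Prod>i\<in>{1..t}. l i ^ r i) q" by (rule prod_coprime_left) (simp add: l)
    ultimately show "real (card (Omega q (\<Prod>i\<in>{1..t}. l i ^ r i) :: 'F poly set))
        = (\<Sum>e\<in>{e. e dvd (\<Prod>i\<in>{1..t}. l i ^ r i)}. real (totient e) / real (ord e (q ^ 2)))"
      using card_Omega_if_dvd_pow_plus_1[OF field_card q_CHAR_power] by blast
  next
    assume "\<forall>i\<in>{1..t}. a i \<noteq> 1"
    then show "card (Omega q (\<Prod>i\<in>{1..t}. l i ^ r i) :: 'F poly set) = 1"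
      by (subst Omega_prod_eq_x_minus_1[OF field_card q_CHAR_power]) (use l not_dvd in auto)
  qed
qed

end
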